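(* Let $T,S\in\mathcal{B}_A(\mathcal{H})$. Then $$\omega_A(TS)\le \|T\|_A\,\omega_A(S)+\tfrac12\,\omega_A\big(TS+ST^{\sharp_A}\big)\quad\text{and}\quad \omega_A(TS)\le \|T\|_A\,\omega_A(S)+\tfrac12\,\omega_A\big(TS-ST^{\sharp_A}\big).$$
   Context: $\mathcal{H}$ is a complex Hilbert space with inner product $\langle\cdot,\cdot\rangle$, and $A$ is a fixed nonzero positive bounded operator on $\mathcal{H}$. Set $\langle x,y\rangle_A=\langle Ax,y\rangle$ and $\|x\|_A=\|A^{1/2}x\|$. $\mathcal{B}_A(\mathcal{H})$ is the set of bounded operators $T$ for which there exists a bounded $S$ with $\langle Tx,y\rangle_A=\langle x,Sy\rangle_A$ for all $x,y$ (equivalently $\mathcal{R}(T^*A)\subseteq\mathcal{R}(A)$). For $T\in\mathcal{B}_A(\mathcal{H})$, $T^{\sharp_A}$ denotes the reduced solution of $AX=T^*A$, i.e. $T^{\sharp_A}=A^\dagger T^*A$ ($A^\dagger$ the Moore–Penrose inverse). For an operator $T$ with $\|Tx\|_A\le\lambda\|x\|_A$ for some $\lambda>0$ and all $x$, $\|T\|_A=\sup\{\|Tx\|_A: \|x\|_A=1\}$, and $\omega_A(T)=\sup\{|\langle Tx,x\rangle_A|:\|x\|_A=1\}$ is the $A$-numerical radius. *)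

theory Defs
  imports "HOL-Analysis.Analysis"
begin

definition hnorm :: "('a \<Rightarrow> 'a \<Rightarrow> complex) \<Rightarrow> 'a \<Rightarrow> real" where
  "hnorm ip x = sqrt (Re (ip x x))"

locale complex_hilbert =
  fixes sc :: "complex \<Rightarrow> 'a::ab_group_add \<Rightarrow> 'a"
    and ip :: "'a \<Rightarrow> 'a \<Rightarrow> complex"
  assumes sc_add_right: "sc a (x + y) = sc a x + sc a y"
    and sc_add_left: "sc (a + b) x = sc a x + sc b x"
    and sc_assoc: "sc a (sc b x) = sc (a * b) x"
    and sc_one: "sc 1 x = x"
    and ip_conj_sym: "ip x y = cnj (ip y x)"
    and ip_add_left: "ip (x + y) z = ip x z + ip y z"
    and ip_sc_left: "ip (sc a x) y = a * ip x y"
    and ip_nonneg: "Im (ip x x) = 0 \<and> 0 \<le> Re (ip x x)"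
    and ip_definite: "ip x x = 0 \<Longrightarrow> x = 0"
    and complete: "(\<forall>e>0. \<exists>N. \<forall>m\<ge>N. \<forall>n\<ge>N. hnorm ip (f m - f n) < e)
                   \<Longrightarrow> \<exists>l. (\<lambda>n. hnorm ip (f n - l)) \<longlonglongrightarrow> 0"

definition bounded_op :: "(complex \<Rightarrow> 'a::ab_group_add \<Rightarrow> 'a) \<Rightarrow> ('a \<Rightarrow> 'a \<Rightarrow> complex)
    \<Rightarrow> ('a \<Rightarrow> 'a) \<Rightarrow> bool" where
  "bounded_op sc ip T \<longleftrightarrow>
     (\<forall>x y. T (x + y) = T x + T y) \<and> (\<forall>a x. T (sc a x) = sc a (T x)) \<and>
     (\<exists>K. \<forall>x. hnorm ip (T x) \<le> K * hnorm ip x)"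

definition positive_op :: "(complex \<Rightarrow> 'a::ab_group_add \<Rightarrow> 'a) \<Rightarrow> ('a \<Rightarrow> 'a \<Rightarrow> complex)
    \<Rightarrow> ('a \<Rightarrow> 'a) \<Rightarrow> bool" where
  "positive_op sc ip A \<longleftrightarrow> bounded_op sc ip A \<and>
     (\<forall>x. Im (ip (A x) x) = 0 \<and> 0 \<le> Re (ip (A x) x))"

definition BA :: "(complex \<Rightarrow> 'a::ab_group_add \<Rightarrow> 'a) \<Rightarrow> ('a \<Rightarrow> 'a \<Rightarrow> complex)
    \<Rightarrow> ('a \<Rightarrow> 'a) \<Rightarrow> ('a \<Rightarrow> 'a) set" where
  "BA sc ip A = {T. bounded_op sc ip T \<and>
      (\<exists>S. bounded_op sc ip S \<and> (\<forall>x y. ip (A (T x)) y = ip (A x) (S y)))}"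

text \<open>T^{sharp_A}: the reduced solution of A X = T^* A, i.e. the unique bounded X with
  A X = T^* A (equivalently ip (A (X x)) y = ip (A x) (T y) for all x y) and
  range of X contained in the closure of the range of A.\<close>
definition sharpA :: "(complex \<Rightarrow> 'a::ab_group_add \<Rightarrow> 'a) \<Rightarrow> ('a \<Rightarrow> 'a \<Rightarrow> complex)
    \<Rightarrow> ('a \<Rightarrow> 'a) \<Rightarrow> ('a \<Rightarrow> 'a) \<Rightarrow> ('a \<Rightarrow> 'a)" where
  "sharpA sc ip A T = (THE X. bounded_op sc ip X \<and>
      (\<forall>x y. ip (A (X x)) y = ip (A x) (T y)) \<and>
      (\<forall>x. \<forall>e>0. \<exists>u. hnorm ip (X x - A u) < e))"

definition normA :: "('a \<Rightarrow> 'a \<Rightarrow> complex) \<Rightarrow> ('a \<Rightarrow> 'a) \<Rightarrow> 'a \<Rightarrow> real" where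
  "normA ip A x = sqrt (Re (ip (A x) x))"

definition opnormA :: "('a \<Rightarrow> 'a \<Rightarrow> complex) \<Rightarrow> ('a \<Rightarrow> 'a) \<Rightarrow> ('a \<Rightarrow> 'a) \<Rightarrow> real" where
  "opnormA ip A T = Sup {normA ip A (T x) | x. normA ip A x = 1}"

definition numradA :: "('a \<Rightarrow> 'a \<Rightarrow> complex) \<Rightarrow> ('a \<Rightarrow> 'a) \<Rightarrow> ('a \<Rightarrow> 'a) \<Rightarrow> real" where
  "numradA ip A T = Sup {cmod (ip (A (T x)) x) | x. normA ip A x = 1}"

end

theory Submission
  imports Defs
begin

(* For an A-unit vector x put y = T^# x, a = <TSx, x>_A = <Sx, y>_A and b = <Sy, x>_A.
  Comparing the quadratic form of S at x + z y and at x - z y, with z = t and z = i t, bounds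
  both |a + b| and |a - b| by 2 w_A(S) |y|_A, and |y|_A <= |T|_A; so 2|a| <= |a + b| + |a - b|
  gives both inequalities.

  T^# is a definite
  description, and a reduced solution exists because the orthogonal projection onto the closure
  of R(A) does (this is where completeness enters). The suprema |T|_A and w_A(S) are finite
  because every T in B_A(H) is A-bounded: if R is an A-adjoint of T, then Q = RT is A-selfadjoint,
  so k |-> |Q^k x|_A is log-convex by Cauchy-Schwarz; as it grows at most like |Q|^k, this forces
  |Qx|_A <= |Q| |x|_A. *)

lemma le_two_sqrt_if_linear_le_quadratic:
  fixes c \<alpha> \<beta> :: real
  assumes bound: "\<And>t. 0 < t \<Longrightarrow> t * c \<le> \<alpha> + t\<^sup>2 * \<beta>" and "0 \<le> \<alpha>" "0 \<le> \<beta>"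
  shows "c \<le> 2 * sqrt (\<alpha> * \<beta>)"
proof (cases "c \<le> 0")
  case True
  moreover have "0 \<le> sqrt (\<alpha> * \<beta>)" using assms(2,3) by simp
  ultimately show ?thesis by linarith
next
  case False
  then have c: "0 < c" by simp
  show ?thesis
  proof (cases "\<beta> = 0")
    case True
    have "(\<alpha> + 1) / c * c \<le> \<alpha>" using bound[of "(\<alpha> + 1) / c"] c True assms(2) by simp
    then show ?thesis using c by simp
  next
    case False
    then have \<beta>: "0 < \<beta>" using assms(3) by simp
    have "c / (2 * \<beta>) * c \<le> \<alpha> + (c / (2 * \<beta>))\<^sup>2 * \<beta>" using bound[of "c / (2 * \<beta>)"] c \<beta> by simp
    then have "c\<^sup>2 \<le> 4 * (\<alpha> * \<beta>)" using \<beta> by (simp add: field_simps power2_eq_square)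
    then have "c \<le> sqrt (4 * (\<alpha> * \<beta>))" by (simp add: real_le_rsqrt)
    then show ?thesis by (simp add: real_sqrt_mult)
  qed
qed

lemma le_two_mult_if_linear_le_quadratic:
  fixes c w a b :: real
  assumes "\<And>t. 0 < t \<Longrightarrow> t * c \<le> w * a\<^sup>2 + t\<^sup>2 * (w * b\<^sup>2)" and "0 \<le> w" "0 \<le> a" "0 \<le> b"
  shows "c \<le> 2 * w * a * b"
proof -
  have "c \<le> 2 * sqrt (w * a\<^sup>2 * (w * b\<^sup>2))"
    using assms by (intro le_two_sqrt_if_linear_le_quadratic) simp_all
  also have "w * a\<^sup>2 * (w * b\<^sup>2) = (w * a * b)\<^sup>2" by algebra
  finally show ?thesis using assms(2-4) by simp
qed

lemma log_convex_ratio_mono: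
  fixes N :: "nat \<Rightarrow> real"
  assumes nonneg: "\<And>k. 0 \<le> N k"
    and log_convex: "\<And>k. (N (Suc k))\<^sup>2 \<le> N k * N (Suc (Suc k))"
  shows "N 1 * N k \<le> N (Suc k) * N 0"
proof (induction k)
  case 0
  show ?case by (simp add: mult.commute)
next
  case (Suc k)
  show ?case
  proof (cases "N k = 0")
    case True
    then have "(N (Suc k))\<^sup>2 \<le> 0" using log_convex[of k] by simp
    then show ?thesis using nonneg by simp
  next
    case False
    then have Nk: "0 < N k" using nonneg[of k] by simp
    have "N k * (N 1 * N (Suc k)) = N (Suc k) * (N 1 * N k)" by (simp add: algebra_simps)
    also have "\<dots> \<le> N (Suc k) * (N (Suc k) * N 0)" using Suc nonneg by (simp add: mult_left_mono)
    also have "\<dots> = (N (Suc k))\<^sup>2 * N 0" by (simp add: power2_eq_square algebra_simps)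
    also have "\<dots> \<le> N k * N (Suc (Suc k)) * N 0" using log_convex[of k] nonneg by (simp add: mult_right_mono)
    finally show ?thesis using Nk by (simp add: algebra_simps)
  qed
qed

lemma log_convex_ge_geometric:
  fixes N :: "nat \<Rightarrow> real"
  assumes nonneg: "\<And>k. 0 \<le> N k"
    and log_convex: "\<And>k. (N (Suc k))\<^sup>2 \<le> N k * N (Suc (Suc k))" and N0: "0 < N 0"
  shows "(N 1 / N 0) ^ k * N 0 \<le> N k"
proof (induction k)
  case (Suc k)
  have "N 1 / N 0 * N k \<le> N (Suc k)"
    using log_convex_ratio_mono[of N k, OF nonneg log_convex] N0 by (simp add: field_simps)
  moreover have "N 1 / N 0 * ((N 1 / N 0) ^ k * N 0) \<le> N 1 / N 0 * N k"
    using Suc by (rule mult_left_mono) (use nonneg N0 in simp)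
  ultimately show ?case by simp
qed simp

lemma log_convex_ratio_le_growth:
  fixes N :: "nat \<Rightarrow> real"
  assumes nonneg: "\<And>k. 0 \<le> N k"
    and log_convex: "\<And>k. (N (Suc k))\<^sup>2 \<le> N k * N (Suc (Suc k))"
    and growth: "\<And>k. N k \<le> C * K ^ k" and K: "0 < K"
  shows "N 1 \<le> K * N 0"
proof (cases "N 0 = 0")
  case True
  then have "(N 1)\<^sup>2 \<le> 0" using log_convex[of 0] by simp
  then show ?thesis using True by simp
next
  case False
  then have N0: "0 < N 0" using nonneg[of 0] by simp
  define r where "r = N 1 / N 0"
  have "r \<le> K"
  proof (rule ccontr)
    assume "\<not> r \<le> K"
    then have "1 < r / K" using K by simp
    then obtain n where n: "C / N 0 < (r / K) ^ n" using real_arch_pow by blast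
    have "r ^ n * N 0 \<le> C * K ^ n"
      using log_convex_ge_geometric[of N, OF nonneg log_convex N0] growth order_trans
      unfolding r_def by blast
    then have "(r / K) ^ n * N 0 \<le> C" using K by (simp add: field_simps)
    then show False using n N0 by (simp add: field_simps)
  qed
  then show ?thesis using N0 by (simp add: r_def field_simps)
qed

lemma bounded_op_add: "bounded_op sc ip T \<Longrightarrow> T (x + y) = T x + T y"
  by (simp add: bounded_op_def)

lemma bounded_op_sc: "bounded_op sc ip T \<Longrightarrow> T (sc a x) = sc a (T x)"
  by (simp add: bounded_op_def)

lemma bounded_op_zero: "bounded_op sc ip T \<Longrightarrow> T 0 = 0"
  using bounded_op_add[of sc ip T 0 0] by simp

lemma bounded_op_minus: "bounded_op sc ip T \<Longrightarrow> T (- x) = - T x"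
  using bounded_op_add[of sc ip T x "- x"] bounded_op_zero[of sc ip T] by (simp add: add_eq_0_iff)

lemma bounded_op_diff: "bounded_op sc ip T \<Longrightarrow> T (x - y) = T x - T y"
  by (simp only: diff_conv_add_uminus bounded_op_add bounded_op_minus)

definition A_bounded :: "('a \<Rightarrow> 'a \<Rightarrow> complex) \<Rightarrow> ('a \<Rightarrow> 'a) \<Rightarrow> ('a \<Rightarrow> 'a) \<Rightarrow> bool" where
  "A_bounded ip A T \<longleftrightarrow> (\<exists>C\<ge>0. \<forall>x. normA ip A (T x) \<le> C * normA ip A x)"

definition range_closure :: "('a::ab_group_add \<Rightarrow> 'a \<Rightarrow> complex) \<Rightarrow> ('a \<Rightarrow> 'a) \<Rightarrow> 'a set" where
  "range_closure ip A = {z. \<forall>e>0. \<exists>u. hnorm ip (z - A u) < e}"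

context complex_hilbert
begin

lemma ip_add_right: "ip x (y + z) = ip x y + ip x z"
  by (metis ip_conj_sym ip_add_left complex_cnj_add)

lemma ip_sc_right: "ip x (sc a y) = cnj a * ip x y"
  by (metis ip_conj_sym ip_sc_left complex_cnj_mult)

lemma ip_zero_left [simp]: "ip 0 y = 0"
  using ip_add_left[of 0 0 y] by simp

lemma ip_zero_right [simp]: "ip x 0 = 0"
  using ip_add_right[of x 0 0] by simp

lemma ip_minus_left: "ip (- x) y = - ip x y"
  using ip_add_left[of x "- x" y] by (simp add: add_eq_0_iff)

lemma ip_minus_right: "ip x (- y) = - ip x y"
  using ip_add_right[of x y "- y"] by (simp add: add_eq_0_iff)

lemma ip_diff_left: "ip (x - y) z = ip x z - ip y z"
  by (simp only: diff_conv_add_uminus ip_add_left ip_minus_left)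

lemma ip_diff_right: "ip x (y - z) = ip x y - ip x z"
  by (simp only: diff_conv_add_uminus ip_add_right ip_minus_right)

lemma sc_zero_right [simp]: "sc a 0 = 0"
  using sc_add_right[of a 0 0] by simp

lemma sc_zero_left [simp]: "sc 0 x = 0"
  using sc_add_left[of 0 0 x] by simp

lemma sc_minus_right: "sc a (- x) = - sc a x"
  using sc_add_right[of a x "- x"] by (simp add: add_eq_0_iff)

lemma sc_minus_left: "sc (- a) x = - sc a x"
  using sc_add_left[of a "- a" x] by (simp add: add_eq_0_iff)

lemma sc_diff_right: "sc a (x - y) = sc a x - sc a y"
  by (simp only: diff_conv_add_uminus sc_add_right sc_minus_right)

lemma sc_two: "sc 2 x = x + x"
  using sc_add_left[of 1 1 x] by (simp add: sc_one)

lemma bounded_op_pos_bound: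
  assumes "bounded_op sc ip T"
  obtains K where "0 < K" "\<And>x. hnorm ip (T x) \<le> K * hnorm ip x"
proof -
  obtain K where K: "\<And>x. hnorm ip (T x) \<le> K * hnorm ip x"
    using assms by (auto simp: bounded_op_def)
  have "hnorm ip (T x) \<le> max K 1 * hnorm ip x" for x
  proof -
    have "K * hnorm ip x \<le> max K 1 * hnorm ip x"
      using ip_nonneg[of x] by (intro mult_right_mono) (auto simp: hnorm_def)
    then show ?thesis using K order_trans by blast
  qed
  then show thesis using that[of "max K 1"] by simp
qed

lemma bounded_op_comp:
  assumes "bounded_op sc ip R" "bounded_op sc ip T"
  shows "bounded_op sc ip (\<lambda>x. R (T x))"
proof -
  obtain K1 where K1: "0 < K1" "\<And>x. hnorm ip (R x) \<le> K1 * hnorm ip x"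
    using bounded_op_pos_bound[OF assms(1)] by blast
  obtain K2 where K2: "\<And>x. hnorm ip (T x) \<le> K2 * hnorm ip x"
    using bounded_op_pos_bound[OF assms(2)] by blast
  have bound: "hnorm ip (R (T x)) \<le> (K1 * K2) * hnorm ip x" for x
  proof -
    have "hnorm ip (R (T x)) \<le> K1 * hnorm ip (T x)" by (rule K1(2))
    also have "\<dots> \<le> K1 * (K2 * hnorm ip x)" using K1(1) K2 by (simp add: mult_left_mono)
    finally show ?thesis by (simp add: mult.assoc)
  qed
  then show ?thesis
    unfolding bounded_op_def
    by (auto simp: bounded_op_add[OF assms(1)] bounded_op_add[OF assms(2)]
        bounded_op_sc[OF assms(1)] bounded_op_sc[OF assms(2)] intro!: exI[of _ "K1 * K2"])
qed

lemma ip_expand: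
  assumes "bounded_op sc ip B"
  shows "ip (B (x + sc z y)) (x + sc z y)
    = ip (B x) x + cnj z * ip (B x) y + z * ip (B y) x + z * cnj z * ip (B y) y"
  using assms
  by (simp add: bounded_op_add bounded_op_sc ip_add_left ip_add_right ip_sc_left ip_sc_right
      algebra_simps)

lemma positive_op_bounded: "positive_op sc ip A \<Longrightarrow> bounded_op sc ip A"
  by (simp add: positive_op_def)

lemma positive_op_Re_nonneg: "positive_op sc ip A \<Longrightarrow> 0 \<le> Re (ip (A x) x)"
  by (simp add: positive_op_def)

lemma positive_op_Im_zero: "positive_op sc ip A \<Longrightarrow> Im (ip (A x) x) = 0"
  by (simp add: positive_op_def)

lemma positive_op_selfadjoint:
  assumes P: "positive_op sc ip A"
  shows "ip (A x) y = ip x (A y)"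
proof -
  have B: "bounded_op sc ip A" using P by (rule positive_op_bounded)
  define a where "a = ip (A x) y"
  define b where "b = ip (A y) x"
  have real: "Im (ip (A u) u) = 0" for u using positive_op_Im_zero[OF P] .
  from real[of "x + sc 1 y"] have "Im a + Im b = 0"
    unfolding ip_expand[OF B] a_def b_def using real by simp
  moreover from real[of "x + sc \<i> y"] have "Re b - Re a = 0"
    unfolding ip_expand[OF B] a_def b_def using real by simp
  ultimately have "b = cnj a" by (simp add: complex_eq_iff)
  then show ?thesis by (metis a_def b_def ip_conj_sym complex_cnj_cnj)
qed

lemma positive_op_conj_sym:
  assumes "positive_op sc ip A"
  shows "ip (A y) x = cnj (ip (A x) y)"
  by (metis assms positive_op_selfadjoint ip_conj_sym)

lemma normA_nonneg [simp]: "positive_op sc ip A \<Longrightarrow> 0 \<le> normA ip A x"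
  by (simp add: normA_def positive_op_Re_nonneg)

lemma normA_square: "positive_op sc ip A \<Longrightarrow> (normA ip A x)\<^sup>2 = Re (ip (A x) x)"
  by (simp add: normA_def positive_op_Re_nonneg)

lemma normA_cauchy_schwarz:
  assumes P: "positive_op sc ip A"
  shows "cmod (ip (A x) y) \<le> normA ip A x * normA ip A y"
proof -
  have B: "bounded_op sc ip A" using P by (rule positive_op_bounded)
  define c where "c = ip (A x) y"
  define k where "k = (cmod c)\<^sup>2"
  define a where "a = Re (ip (A x) x)"
  define b where "b = Re (ip (A y) y)"
  have ab: "0 \<le> a" "0 \<le> b" using positive_op_Re_nonneg[OF P] by (simp_all add: a_def b_def)
  have cc: "c * cnj c = of_real k" "cnj c * c = of_real k"
    unfolding k_def complex_norm_square by (simp_all add: mult.commute)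
  have "t * (2 * k) \<le> a + t\<^sup>2 * (k * b)" for t :: real
  proof -
    define z where "z = - (of_real t * c)"
    have "ip (A (x + sc z y)) (x + sc z y)
        = ip (A x) x - of_real t * (cnj c * c) - of_real t * (c * cnj c)
          + of_real (t\<^sup>2) * (c * cnj c) * ip (A y) y"
      unfolding ip_expand[OF B] positive_op_conj_sym[OF P, of y x] c_def[symmetric] z_def
      by (simp add: algebra_simps power2_eq_square)
    then have "Re (ip (A (x + sc z y)) (x + sc z y)) = a - 2 * t * k + t\<^sup>2 * k * b"
      unfolding cc a_def b_def by simp
    then show ?thesis using positive_op_Re_nonneg[OF P, of "x + sc z y"] by (simp add: algebra_simps)
  qed
  moreover have k: "0 \<le> k" by (simp add: k_def)
  ultimately have "2 * k \<le> 2 * sqrt (a * (k * b))"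
    using ab by (intro le_two_sqrt_if_linear_le_quadratic) simp_all
  then have "k\<^sup>2 \<le> (sqrt (a * (k * b)))\<^sup>2"
    using k by (intro power_mono) simp_all
  then have "k * k \<le> k * (a * b)"
    using ab k by (simp add: power2_eq_square algebra_simps)
  then have "k \<le> a * b"
    using ab k by (cases "k = 0") simp_all
  then have "(cmod c)\<^sup>2 \<le> (normA ip A x * normA ip A y)\<^sup>2"
    by (simp add: k_def a_def b_def power_mult_distrib normA_square[OF P])
  then show ?thesis using P by (simp add: c_def power2_le_iff_abs_le)
qed

lemma normA_eq_0_ip:
  assumes "positive_op sc ip A" "normA ip A x = 0"
  shows "ip (A x) y = 0" "ip (A y) x = 0"
  using normA_cauchy_schwarz[OF assms(1), of x y] normA_cauchy_schwarz[OF assms(1), of y x] assms(2)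
  by simp_all

lemma normA_sc:
  assumes P: "positive_op sc ip A"
  shows "normA ip A (sc a x) = cmod a * normA ip A x"
proof -
  have "ip (A (sc a x)) (sc a x) = a * cnj a * ip (A x) x"
    using positive_op_bounded[OF P] by (simp add: bounded_op_sc ip_sc_left ip_sc_right)
  then have "ip (A (sc a x)) (sc a x) = of_real ((cmod a)\<^sup>2) * ip (A x) x"
    by (simp only: complex_norm_square)
  then have "(normA ip A (sc a x))\<^sup>2 = (cmod a * normA ip A x)\<^sup>2"
    by (simp add: normA_square[OF P] power_mult_distrib)
  then show ?thesis using P by simp
qed

lemma normA_minus:
  assumes "positive_op sc ip A"
  shows "normA ip A (- x) = normA ip A x"
  using normA_sc[OF assms, of "-1" x] by (simp add: sc_minus_left sc_one)

lemma normA_triangle: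
  assumes P: "positive_op sc ip A"
  shows "normA ip A (x + y) \<le> normA ip A x + normA ip A y"
proof -
  have "ip (A (x + y)) (x + y) = ip (A x) x + ip (A x) y + ip (A y) x + ip (A y) y"
    using ip_expand[OF positive_op_bounded[OF P], of x 1 y] by (simp add: sc_one)
  then have "(normA ip A (x + y))\<^sup>2
      = (normA ip A x)\<^sup>2 + Re (ip (A x) y) + Re (ip (A y) x) + (normA ip A y)\<^sup>2"
    by (simp add: normA_square[OF P])
  also have "\<dots> \<le> (normA ip A x)\<^sup>2 + 2 * (normA ip A x * normA ip A y) + (normA ip A y)\<^sup>2"
    using normA_cauchy_schwarz[OF P, of x y] normA_cauchy_schwarz[OF P, of y x]
      complex_Re_le_cmod[of "ip (A x) y"] complex_Re_le_cmod[of "ip (A y) x"]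
    by (simp only: mult.commute[of "normA ip A y"])
  also have "\<dots> = (normA ip A x + normA ip A y)\<^sup>2" by (simp add: power2_sum)
  finally have "(normA ip A (x + y))\<^sup>2 \<le> (normA ip A x + normA ip A y)\<^sup>2" .
  then show ?thesis using P by (simp add: power2_le_iff_abs_le)
qed

lemma normA_parallelogram:
  assumes P: "positive_op sc ip A"
  shows "(normA ip A (x + y))\<^sup>2 + (normA ip A (x - y))\<^sup>2 = 2 * (normA ip A x)\<^sup>2 + 2 * (normA ip A y)\<^sup>2"
  using positive_op_bounded[OF P]
  by (simp add: normA_square[OF P] bounded_op_add bounded_op_diff ip_add_left ip_add_right
      ip_diff_left ip_diff_right)

lemma positive_op_id: "positive_op sc ip id"
  using ip_nonneg by (auto simp: positive_op_def bounded_op_def intro: exI[of _ 1])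

lemma hnorm_eq_normA_id: "hnorm ip x = normA ip id x"
  by (simp add: hnorm_def normA_def)

lemmas hnorm_nonneg [simp] = normA_nonneg[OF positive_op_id, folded hnorm_eq_normA_id]
lemmas hnorm_square = normA_square[OF positive_op_id, folded hnorm_eq_normA_id, simplified]
lemmas hnorm_cauchy_schwarz = normA_cauchy_schwarz[OF positive_op_id, folded hnorm_eq_normA_id, simplified]
lemmas hnorm_sc = normA_sc[OF positive_op_id, folded hnorm_eq_normA_id]
lemmas hnorm_minus = normA_minus[OF positive_op_id, folded hnorm_eq_normA_id]
lemmas hnorm_triangle = normA_triangle[OF positive_op_id, folded hnorm_eq_normA_id]
lemmas hnorm_parallelogram = normA_parallelogram[OF positive_op_id, folded hnorm_eq_normA_id]

lemma hnorm_commute: "hnorm ip (x - y) = hnorm ip (y - x)"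
  using hnorm_minus[of "x - y"] by simp

lemma hnorm_zero [simp]: "hnorm ip 0 = 0"
  by (simp add: hnorm_def)

lemma hnorm_eq_0_iff [simp]: "hnorm ip x = 0 \<longleftrightarrow> x = 0"
proof
  assume "hnorm ip x = 0"
  then have "Re (ip x x) = 0" using hnorm_square[of x] by simp
  then have "ip x x = 0" using ip_nonneg[of x] by (simp add: complex_eq_iff)
  then show "x = 0" by (rule ip_definite)
qed simp

lemma normA_le_hnorm:
  assumes P: "positive_op sc ip A"
  obtains C where "0 \<le> C" "\<And>x. normA ip A x \<le> C * hnorm ip x"
proof -
  obtain K where K: "0 < K" "\<And>x. hnorm ip (A x) \<le> K * hnorm ip x"
    using bounded_op_pos_bound[OF positive_op_bounded[OF P]] by blast
  have "normA ip A x \<le> sqrt K * hnorm ip x" for x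
  proof -
    have "(normA ip A x)\<^sup>2 \<le> cmod (ip (A x) x)"
      by (simp add: normA_square[OF P] complex_Re_le_cmod)
    also have "\<dots> \<le> hnorm ip (A x) * hnorm ip x" by (rule hnorm_cauchy_schwarz)
    also have "\<dots> \<le> K * hnorm ip x * hnorm ip x" using K by (simp add: mult_right_mono)
    also have "\<dots> = (sqrt K * hnorm ip x)\<^sup>2" using K by (simp add: power_mult_distrib power2_eq_square)
    finally show ?thesis by (rule power2_le_imp_le) (use K in simp)
  qed
  then show thesis using that[of "sqrt K"] K by simp
qed

lemma bounded_op_funpow_bound:
  assumes "\<And>x. hnorm ip (Q x) \<le> K * hnorm ip x" "0 \<le> K"
  shows "hnorm ip ((Q ^^ k) x) \<le> K ^ k * hnorm ip x"
proof (induction k)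
  case (Suc k)
  have "hnorm ip ((Q ^^ Suc k) x) \<le> K * hnorm ip ((Q ^^ k) x)" using assms(1) by simp
  also have "\<dots> \<le> K * (K ^ k * hnorm ip x)" using Suc assms(2) by (rule mult_left_mono)
  finally show ?case by (simp add: mult.assoc)
qed simp

lemma A_selfadjoint_A_bounded:
  assumes P: "positive_op sc ip A" and Q: "bounded_op sc ip Q"
    and selfadjoint: "\<And>x y. ip (A (Q x)) y = ip (A x) (Q y)"
  shows "A_bounded ip A Q"
proof -
  obtain K where K: "0 < K" "\<And>x. hnorm ip (Q x) \<le> K * hnorm ip x"
    using bounded_op_pos_bound[OF Q] by blast
  obtain C where C: "0 \<le> C" "\<And>x. normA ip A x \<le> C * hnorm ip x"
    using normA_le_hnorm[OF P] by blast
  have "normA ip A (Q x) \<le> K * normA ip A x" for x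
  proof -
    define N where "N k = normA ip A ((Q ^^ k) x)" for k
    have "N 1 \<le> K * N 0"
    proof (rule log_convex_ratio_le_growth)
      show "0 \<le> N k" for k using P by (simp add: N_def)
      show "(N (Suc k))\<^sup>2 \<le> N k * N (Suc (Suc k))" for k
      proof -
        have "(N (Suc k))\<^sup>2 = Re (ip (A ((Q ^^ k) x)) (Q (Q ((Q ^^ k) x))))"
          by (simp add: N_def normA_square[OF P] selfadjoint)
        also have "\<dots> \<le> N k * N (Suc (Suc k))"
          using normA_cauchy_schwarz[OF P] complex_Re_le_cmod order_trans by (simp add: N_def) blast
        finally show ?thesis .
      qed
      show "N k \<le> (C * hnorm ip x) * K ^ k" for k
      proof -
        have "N k \<le> C * (K ^ k * hnorm ip x)"
          unfolding N_def using C bounded_op_funpow_bound[OF K(2)] K(1)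
          by (meson less_imp_le mult_left_mono order_trans)
        then show ?thesis by (simp add: algebra_simps)
      qed
    qed (use K in simp)
    then show ?thesis by (simp add: N_def)
  qed
  then show ?thesis using K unfolding A_bounded_def by (auto intro!: exI[of _ K])
qed

lemma A_adjoint_sym:
  assumes P: "positive_op sc ip A" and adjoint: "\<And>x y. ip (A (T x)) y = ip (A x) (R y)"
  shows "ip (A (R x)) y = ip (A x) (T y)"
  using adjoint[of y x] positive_op_conj_sym[OF P, of "R x" y] positive_op_conj_sym[OF P, of "T y" x]
  by (metis complex_cnj_cnj)

lemma BA_A_bounded:
  assumes P: "positive_op sc ip A" and T: "T \<in> BA sc ip A"
  shows "A_bounded ip A T"
proof -
  obtain R where R: "bounded_op sc ip R" and adjoint: "\<And>x y. ip (A (T x)) y = ip (A x) (R y)"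
    using T by (auto simp: BA_def)
  have "A_bounded ip A (\<lambda>x. R (T x))"
  proof (rule A_selfadjoint_A_bounded[OF P])
    show "bounded_op sc ip (\<lambda>x. R (T x))" using R T by (simp add: BA_def bounded_op_comp)
    show "ip (A (R (T x))) y = ip (A x) (R (T y))" for x y
      using A_adjoint_sym[of A T R, OF P adjoint] adjoint by simp
  qed
  then obtain K where K: "0 \<le> K" "\<And>x. normA ip A (R (T x)) \<le> K * normA ip A x"
    unfolding A_bounded_def by blast
  have "normA ip A (T x) \<le> sqrt K * normA ip A x" for x
  proof -
    have "(normA ip A (T x))\<^sup>2 = Re (ip (A x) (R (T x)))" by (simp add: normA_square[OF P] adjoint)
    also have "\<dots> \<le> normA ip A x * normA ip A (R (T x))"
      using normA_cauchy_schwarz[OF P] complex_Re_le_cmod order_trans by blast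
    also have "\<dots> \<le> normA ip A x * (K * normA ip A x)" using K P by (simp add: mult_left_mono)
    also have "\<dots> = (sqrt K * normA ip A x)\<^sup>2" using K by (simp add: power_mult_distrib power2_eq_square)
    finally show ?thesis by (rule power2_le_imp_le) (use K P in simp)
  qed
  then show ?thesis using K unfolding A_bounded_def by (auto intro!: exI[of _ "sqrt K"])
qed

lemma A_bounded_comp:
  assumes "A_bounded ip A T" "A_bounded ip A S"
  shows "A_bounded ip A (\<lambda>x. T (S x))"
proof -
  obtain C D where C: "0 \<le> C" "\<And>x. normA ip A (T x) \<le> C * normA ip A x"
    and D: "0 \<le> D" "\<And>x. normA ip A (S x) \<le> D * normA ip A x"
    using assms unfolding A_bounded_def by blast
  have "normA ip A (T (S x)) \<le> (C * D) * normA ip A x" for x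
    using C(2)[of "S x"] mult_left_mono[OF D(2)[of x] C(1)] by (simp add: mult.assoc)
  then show ?thesis using C(1) D(1) unfolding A_bounded_def by (auto intro!: exI[of _ "C * D"])
qed

lemma A_bounded_add:
  assumes P: "positive_op sc ip A" and "A_bounded ip A U" "A_bounded ip A V"
  shows "A_bounded ip A (\<lambda>x. U x + V x)"
proof -
  obtain C D where C: "0 \<le> C" "\<And>x. normA ip A (U x) \<le> C * normA ip A x"
    and D: "0 \<le> D" "\<And>x. normA ip A (V x) \<le> D * normA ip A x"
    using assms(2,3) unfolding A_bounded_def by blast
  have "normA ip A (U x + V x) \<le> (C + D) * normA ip A x" for x
    using normA_triangle[OF P, of "U x" "V x"] C(2)[of x] D(2)[of x] by (simp add: distrib_right)
  then show ?thesis using C(1) D(1) unfolding A_bounded_def by (auto intro!: exI[of _ "C + D"])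
qed

lemma A_bounded_diff:
  assumes P: "positive_op sc ip A" and "A_bounded ip A U" "A_bounded ip A V"
  shows "A_bounded ip A (\<lambda>x. U x - V x)"
proof -
  have "A_bounded ip A (\<lambda>x. - V x)"
    using assms(3) by (simp add: A_bounded_def normA_minus[OF P])
  from A_bounded_add[OF P assms(2) this] show ?thesis by simp
qed

definition closed_subspace :: "'a set \<Rightarrow> bool" where
  "closed_subspace M \<longleftrightarrow> 0 \<in> M \<and> (\<forall>x\<in>M. \<forall>y\<in>M. x + y \<in> M) \<and> (\<forall>a. \<forall>x\<in>M. sc a x \<in> M) \<and>
     (\<forall>f l. (\<forall>n. f n \<in> M) \<and> (\<lambda>n. hnorm ip (f n - l)) \<longlonglongrightarrow> 0 \<longrightarrow> l \<in> M)"

lemma closed_subspace_add: "closed_subspace M \<Longrightarrow> x \<in> M \<Longrightarrow> y \<in> M \<Longrightarrow> x + y \<in> M"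
  by (simp add: closed_subspace_def)

lemma closed_subspace_sc: "closed_subspace M \<Longrightarrow> x \<in> M \<Longrightarrow> sc a x \<in> M"
  by (simp add: closed_subspace_def)

lemma closed_subspace_diff: "closed_subspace M \<Longrightarrow> x \<in> M \<Longrightarrow> y \<in> M \<Longrightarrow> x - y \<in> M"
  using closed_subspace_add[of M x "sc (-1) y"] closed_subspace_sc[of M y "-1"]
  by (simp add: sc_minus_left sc_one)

lemma closed_subspace_limit:
  "closed_subspace M \<Longrightarrow> (\<And>n. f n \<in> M) \<Longrightarrow> (\<lambda>n. hnorm ip (f n - l)) \<longlonglongrightarrow> 0 \<Longrightarrow> l \<in> M"
  unfolding closed_subspace_def by blast

lemma hnorm_midpoint:
  "(hnorm ip (u - v))\<^sup>2
    = 2 * (hnorm ip (y - u))\<^sup>2 + 2 * (hnorm ip (y - v))\<^sup>2 - 4 * (hnorm ip (y - sc (1/2) (u + v)))\<^sup>2"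
proof -
  have "(y - u) + (y - v) = sc 2 (y - sc (1/2) (u + v))"
    by (simp add: sc_diff_right sc_assoc sc_one sc_two algebra_simps)
  then have "(hnorm ip ((y - u) + (y - v)))\<^sup>2 = 4 * (hnorm ip (y - sc (1/2) (u + v)))\<^sup>2"
    by (simp add: hnorm_sc power_mult_distrib)
  moreover have "(y - u) - (y - v) = v - u" by simp
  ultimately show ?thesis
    using hnorm_parallelogram[of "y - u" "y - v"] hnorm_commute[of u v] by simp
qed

lemma hnorm_convergent_if_Cauchy:
  assumes Cauchy: "\<And>m n. (hnorm ip (f m - f n))\<^sup>2 \<le> e m + e n" and e: "e \<longlonglongrightarrow> 0"
  shows "\<exists>l. (\<lambda>n. hnorm ip (f n - l)) \<longlonglongrightarrow> 0"
proof (rule complete, intro allI impI)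
  fix \<epsilon> :: real
  assume "0 < \<epsilon>"
  then obtain N where N: "\<And>n. N \<le> n \<Longrightarrow> \<bar>e n\<bar> < \<epsilon>\<^sup>2 / 2"
    using LIMSEQ_D[OF e, of "\<epsilon>\<^sup>2 / 2"] by auto
  have "hnorm ip (f m - f n) < \<epsilon>" if "N \<le> m" "N \<le> n" for m n
  proof -
    have "(hnorm ip (f m - f n))\<^sup>2 < \<epsilon>\<^sup>2"
      using Cauchy[of m n] N[OF that(1)] N[OF that(2)] by linarith
    then show ?thesis using \<open>0 < \<epsilon>\<close> by (simp add: power_less_imp_less_base)
  qed
  then show "\<exists>N. \<forall>m\<ge>N. \<forall>n\<ge>N. hnorm ip (f m - f n) < \<epsilon>" by blast
qed

lemma nearest_point_exists:
  assumes M: "closed_subspace M"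
  obtains l where "l \<in> M" "\<And>m. m \<in> M \<Longrightarrow> hnorm ip (y - l) \<le> hnorm ip (y - m)"
proof -
  define d where "d = Inf ((\<lambda>m. hnorm ip (y - m)) ` M)"
  have M0: "0 \<in> M" using M by (simp add: closed_subspace_def)
  have d_le: "d \<le> hnorm ip (y - m)" if "m \<in> M" for m
    unfolding d_def using that by (intro cInf_lower bdd_belowI[of _ 0]) auto
  have d0: "0 \<le> d" unfolding d_def using M0 by (intro cInf_greatest) auto
  define \<delta> where "\<delta> n = inverse (real (Suc n))" for n
  have \<delta>: "\<delta> \<longlonglongrightarrow> 0" unfolding \<delta>_def by (rule LIMSEQ_inverse_real_of_nat)
  have "\<exists>m\<in>M. hnorm ip (y - m) < d + \<delta> n" for n
    using cInf_lessD[of "(\<lambda>m. hnorm ip (y - m)) ` M" "d + \<delta> n"] M0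
    by (auto simp: d_def \<delta>_def)
  then obtain f where f: "\<And>n. f n \<in> M" "\<And>n. hnorm ip (y - f n) < d + \<delta> n" by metis
  define e where "e n = 2 * ((d + \<delta> n)\<^sup>2 - d\<^sup>2)" for n
  have Cauchy: "(hnorm ip (f m - f n))\<^sup>2 \<le> e m + e n" for m n
  proof -
    have "sc (1/2) (f m + f n) \<in> M" using M f(1) by (simp add: closed_subspace_add closed_subspace_sc)
    then have "d\<^sup>2 \<le> (hnorm ip (y - sc (1/2) (f m + f n)))\<^sup>2" using d_le d0 by (simp add: power_mono)
    moreover have sq: "(hnorm ip (y - f k))\<^sup>2 \<le> (d + \<delta> k)\<^sup>2" for k
      using f(2)[of k] by (simp add: power_mono)
    ultimately show ?thesis
      using hnorm_midpoint[of "f m" "f n" y] sq[of m] sq[of n] unfolding e_def by (smt (verit))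
  qed
  have "e \<longlonglongrightarrow> 2 * ((d + 0)\<^sup>2 - d\<^sup>2)"
    unfolding e_def by (intro tendsto_intros \<delta>)
  then have "e \<longlonglongrightarrow> 0" by simp
  then obtain l where l: "(\<lambda>n. hnorm ip (f n - l)) \<longlonglongrightarrow> 0"
    using hnorm_convergent_if_Cauchy[of f e, OF Cauchy] by blast
  have "hnorm ip (y - l) \<le> d"
  proof (rule LIMSEQ_le_const)
    show "(\<lambda>n. d + \<delta> n + hnorm ip (f n - l)) \<longlonglongrightarrow> d"
      using tendsto_add[OF tendsto_add[OF tendsto_const[of d] \<delta>] l] by simp
    have "hnorm ip (y - l) \<le> d + \<delta> n + hnorm ip (f n - l)" for n
      using hnorm_triangle[of "y - f n" "f n - l"] f(2)[of n] by simp
    then show "\<exists>N. \<forall>n\<ge>N. hnorm ip (y - l) \<le> d + \<delta> n + hnorm ip (f n - l)" by blast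
  qed
  then have "hnorm ip (y - l) \<le> hnorm ip (y - m)" if "m \<in> M" for m
    using d_le[OF that] by linarith
  with closed_subspace_limit[OF M f(1) l] show thesis by (rule that)
qed

lemma Re_ip_eq_0_if_minimal:
  assumes minimal: "\<And>t::real. hnorm ip v \<le> hnorm ip (v + sc (of_real t) m)"
  shows "Re (ip v m) = 0"
proof -
  have expand: "(hnorm ip (v + sc (of_real t) m))\<^sup>2
      = (hnorm ip v)\<^sup>2 + t * (2 * Re (ip v m)) + t\<^sup>2 * (hnorm ip m)\<^sup>2" for t
  proof -
    have "ip (v + sc (of_real t) m) (v + sc (of_real t) m)
        = ip v v + of_real t * (ip v m + cnj (ip v m)) + of_real (t\<^sup>2) * ip m m"
      using ip_expand[OF positive_op_bounded[OF positive_op_id], of v "of_real t" m]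
        ip_conj_sym[of m v]
      by (simp add: algebra_simps power2_eq_square)
    then show ?thesis unfolding hnorm_square by simp
  qed
  have quadratic: "0 \<le> t * (2 * Re (ip v m)) + t\<^sup>2 * (hnorm ip m)\<^sup>2" for t
    using power_mono[OF minimal[of t] hnorm_nonneg, of 2] expand[of t] by simp
  have "2 * Re (ip v m) \<le> 2 * sqrt (0 * (hnorm ip m)\<^sup>2)"
  proof (rule le_two_sqrt_if_linear_le_quadratic)
    show "t * (2 * Re (ip v m)) \<le> 0 + t\<^sup>2 * (hnorm ip m)\<^sup>2" for t
      using quadratic[of "- t"] by simp
  qed simp_all
  moreover have "- 2 * Re (ip v m) \<le> 2 * sqrt (0 * (hnorm ip m)\<^sup>2)"
  proof (rule le_two_sqrt_if_linear_le_quadratic)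
    show "t * (- 2 * Re (ip v m)) \<le> 0 + t\<^sup>2 * (hnorm ip m)\<^sup>2" for t
      using quadratic[of t] by simp
  qed simp_all
  ultimately show ?thesis by simp
qed

lemma nearest_point_orthogonal:
  assumes M: "closed_subspace M" and l: "l \<in> M"
    and nearest: "\<And>m. m \<in> M \<Longrightarrow> hnorm ip (y - l) \<le> hnorm ip (y - m)" and m: "m \<in> M"
  shows "ip (y - l) m = 0"
proof -
  have Re0: "Re (ip (y - l) m') = 0" if "m' \<in> M" for m'
  proof (rule Re_ip_eq_0_if_minimal)
    fix t :: real
    have "l - sc (of_real t) m' \<in> M" using M l that by (simp add: closed_subspace_diff closed_subspace_sc)
    from nearest[OF this] show "hnorm ip (y - l) \<le> hnorm ip (y - l + sc (of_real t) m')"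
      by (simp add: algebra_simps)
  qed
  have "Im (ip (y - l) m) = Re (ip (y - l) (sc \<i> m))" by (simp add: ip_sc_right)
  also have "\<dots> = 0" using Re0 closed_subspace_sc[OF M m] by blast
  finally show ?thesis using Re0[OF m] by (simp add: complex_eq_iff)
qed

lemma orthogonal_decomposition_unique:
  assumes M: "closed_subspace M" and "l\<^sub>1 \<in> M" "l\<^sub>2 \<in> M"
    and "\<And>m. m \<in> M \<Longrightarrow> ip (y - l\<^sub>1) m = 0" "\<And>m. m \<in> M \<Longrightarrow> ip (y - l\<^sub>2) m = 0"
  shows "l\<^sub>1 = l\<^sub>2"
proof -
  have "l\<^sub>2 - l\<^sub>1 \<in> M" using closed_subspace_diff[OF M assms(3,2)] .
  then have "ip ((y - l\<^sub>1) - (y - l\<^sub>2)) (l\<^sub>2 - l\<^sub>1) = 0" using assms(4,5) by (simp add: ip_diff_left)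
  then have "ip (l\<^sub>2 - l\<^sub>1) (l\<^sub>2 - l\<^sub>1) = 0" by simp
  then show ?thesis using ip_definite by fastforce
qed

lemma orthogonal_projection_exists:
  assumes M: "closed_subspace M"
  obtains P where "bounded_op sc ip P" "\<And>y. P y \<in> M" "\<And>y m. m \<in> M \<Longrightarrow> ip (y - P y) m = 0"
proof -
  have "\<exists>l. l \<in> M \<and> (\<forall>m\<in>M. ip (y - l) m = 0)" for y
    using nearest_point_exists[OF M] nearest_point_orthogonal[OF M] by metis
  then obtain P where P: "\<And>y. P y \<in> M" and orth: "\<And>y m. m \<in> M \<Longrightarrow> ip (y - P y) m = 0"
    by metis
  have "P (x + y) = P x + P y" for x y
  proof (rule orthogonal_decomposition_unique[OF M P closed_subspace_add[OF M P P] orth])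
    have split: "x + y - (P x + P y) = (x - P x) + (y - P y)" by simp
    show "ip (x + y - (P x + P y)) m = 0" if "m \<in> M" for m
      unfolding split ip_add_left using orth[OF that] by simp
  qed
  moreover have "P (sc a x) = sc a (P x)" for a x
    using P orth closed_subspace_sc[OF M P]
    by (intro orthogonal_decomposition_unique[OF M, of _ _ "sc a x"])
      (auto simp: ip_sc_left sc_diff_right[symmetric])
  moreover have "hnorm ip (P y) \<le> 1 * hnorm ip y" for y
  proof -
    have "(hnorm ip (P y))\<^sup>2 = Re (ip y (P y))"
      using orth[OF P, of y] by (simp add: hnorm_square ip_diff_left)
    also have "\<dots> \<le> hnorm ip y * hnorm ip (P y)"
      using hnorm_cauchy_schwarz complex_Re_le_cmod order_trans by blast
    finally have "hnorm ip (P y) * hnorm ip (P y) \<le> hnorm ip y * hnorm ip (P y)"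
      by (simp add: power2_eq_square)
    then show ?thesis
      using hnorm_nonneg[of "P y"] by (cases "hnorm ip (P y) = 0") (auto simp: mult_le_cancel_right)
  qed
  ultimately have "bounded_op sc ip P" unfolding bounded_op_def by blast
  then show thesis using that P orth by blast
qed

lemma range_closure_image: "A u \<in> range_closure ip A"
  by (auto simp: range_closure_def intro!: exI[of _ u])

lemma range_closure_add:
  assumes B: "bounded_op sc ip A" and "z\<^sub>1 \<in> range_closure ip A" "z\<^sub>2 \<in> range_closure ip A"
  shows "z\<^sub>1 + z\<^sub>2 \<in> range_closure ip A"
  unfolding range_closure_def
proof (intro CollectI allI impI)
  fix e :: real
  assume "0 < e"
  then have "0 < e/2" by simp
  then obtain u\<^sub>1 u\<^sub>2 where u: "hnorm ip (z\<^sub>1 - A u\<^sub>1) < e/2" "hnorm ip (z\<^sub>2 - A u\<^sub>2) < e/2"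
    using assms(2,3) unfolding range_closure_def by blast
  have "z\<^sub>1 + z\<^sub>2 - A (u\<^sub>1 + u\<^sub>2) = (z\<^sub>1 - A u\<^sub>1) + (z\<^sub>2 - A u\<^sub>2)"
    using B by (simp add: bounded_op_add algebra_simps)
  then have "hnorm ip (z\<^sub>1 + z\<^sub>2 - A (u\<^sub>1 + u\<^sub>2)) \<le> hnorm ip (z\<^sub>1 - A u\<^sub>1) + hnorm ip (z\<^sub>2 - A u\<^sub>2)"
    by (simp only: hnorm_triangle)
  then show "\<exists>u. hnorm ip (z\<^sub>1 + z\<^sub>2 - A u) < e"
    using u by (intro exI[of _ "u\<^sub>1 + u\<^sub>2"]) linarith
qed

lemma range_closure_sc:
  assumes B: "bounded_op sc ip A" and z: "z \<in> range_closure ip A"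
  shows "sc a z \<in> range_closure ip A"
  unfolding range_closure_def
proof (intro CollectI allI impI)
  fix e :: real
  assume "0 < e"
  then have "0 < e / (cmod a + 1)" by (simp add: add_nonneg_pos)
  then obtain u where u: "hnorm ip (z - A u) < e / (cmod a + 1)"
    using z unfolding range_closure_def by blast
  have "hnorm ip (sc a z - A (sc a u)) = cmod a * hnorm ip (z - A u)"
    using B by (simp add: bounded_op_sc sc_diff_right[symmetric] hnorm_sc)
  also have "\<dots> \<le> (cmod a + 1) * hnorm ip (z - A u)" by (simp add: mult_right_mono)
  also have "\<dots> < e" using u by (simp add: pos_less_divide_eq add_nonneg_pos mult.commute)
  finally show "\<exists>u. hnorm ip (sc a z - A u) < e" by blast
qed

lemma range_closure_limit:
  assumes f: "\<And>n. f n \<in> range_closure ip A" and l: "(\<lambda>n. hnorm ip (f n - l)) \<longlonglongrightarrow> 0"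
  shows "l \<in> range_closure ip A"
  unfolding range_closure_def
proof (intro CollectI allI impI)
  fix e :: real
  assume "0 < e"
  then have "0 < e/2" by simp
  then obtain n where n: "hnorm ip (f n - l) < e/2"
    using LIMSEQ_D[OF l] by fastforce
  obtain u where u: "hnorm ip (f n - A u) < e/2"
    using f \<open>0 < e/2\<close> unfolding range_closure_def by blast
  have "hnorm ip (l - A u) \<le> hnorm ip (l - f n) + hnorm ip (f n - A u)"
    using hnorm_triangle[of "l - f n" "f n - A u"] by simp
  then show "\<exists>u. hnorm ip (l - A u) < e"
    using n u hnorm_commute[of l "f n"] by (intro exI[of _ u]) linarith
qed

lemma closed_subspace_range_closure:
  assumes "bounded_op sc ip A"
  shows "closed_subspace (range_closure ip A)"
proof -
  have "0 \<in> range_closure ip A" using range_closure_image[of A 0] bounded_op_zero[OF assms] by simp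
  then show ?thesis
    unfolding closed_subspace_def
    using range_closure_add[OF assms] range_closure_sc[OF assms] range_closure_limit by blast
qed

lemma range_closure_kernel_trivial:
  assumes P: "positive_op sc ip A" and z: "z \<in> range_closure ip A" and kernel: "\<And>y. ip (A z) y = 0"
  shows "z = 0"
proof (rule ccontr)
  assume "z \<noteq> 0"
  then have "hnorm ip z \<noteq> 0" by simp
  then have pos: "0 < hnorm ip z" using hnorm_nonneg[of z] by linarith
  then have "0 < hnorm ip z / 2" by simp
  then obtain u where u: "hnorm ip (z - A u) < hnorm ip z / 2"
    using z unfolding range_closure_def by blast
  have "ip z (A u) = 0" using kernel[of u] positive_op_selfadjoint[OF P] by simp
  then have "(hnorm ip z)\<^sup>2 = Re (ip z (z - A u))" by (simp add: hnorm_square ip_diff_right)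
  also have "\<dots> \<le> hnorm ip z * hnorm ip (z - A u)"
    using hnorm_cauchy_schwarz complex_Re_le_cmod order_trans by blast
  also have "\<dots> < hnorm ip z * (hnorm ip z / 2)" by (rule mult_strict_left_mono[OF u pos])
  finally show False using pos by (simp add: power2_eq_square)
qed

definition reduced_solution :: "('a \<Rightarrow> 'a) \<Rightarrow> ('a \<Rightarrow> 'a) \<Rightarrow> ('a \<Rightarrow> 'a) \<Rightarrow> bool" where
  "reduced_solution A T X \<longleftrightarrow> bounded_op sc ip X \<and> (\<forall>x y. ip (A (X x)) y = ip (A x) (T y)) \<and>
     (\<forall>x. X x \<in> range_closure ip A)"

lemma sharpA_eq_The_reduced_solution: "sharpA sc ip A T = (THE X. reduced_solution A T X)"
  by (simp add: sharpA_def reduced_solution_def range_closure_def)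

lemma reduced_solution_exists:
  assumes P: "positive_op sc ip A" and T: "T \<in> BA sc ip A"
  obtains X where "reduced_solution A T X"
proof -
  have B: "bounded_op sc ip A" using P by (rule positive_op_bounded)
  obtain R where R: "bounded_op sc ip R" and adjoint: "\<And>x y. ip (A (T x)) y = ip (A x) (R y)"
    using T by (auto simp: BA_def)
  obtain Proj where Proj: "bounded_op sc ip Proj" "\<And>y. Proj y \<in> range_closure ip A"
    and orth: "\<And>y m. m \<in> range_closure ip A \<Longrightarrow> ip (y - Proj y) m = 0"
    using orthogonal_projection_exists[OF closed_subspace_range_closure[OF B]] by blast
  have "ip (A (Proj (R x))) y = ip (A x) (T y)" for x y
  proof -
    have "ip (A (Proj (R x))) y = ip (Proj (R x)) (A y)" by (rule positive_op_selfadjoint[OF P])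
    also have "\<dots> = ip (R x) (A y)"
      using orth[OF range_closure_image[of A y], of "R x"] by (simp add: ip_diff_left)
    also have "\<dots> = ip (A (R x)) y" by (rule positive_op_selfadjoint[OF P, symmetric])
    also have "\<dots> = ip (A x) (T y)" by (rule A_adjoint_sym[of A T R, OF P adjoint])
    finally show ?thesis .
  qed
  then have "reduced_solution A T (\<lambda>x. Proj (R x))"
    using bounded_op_comp[OF Proj(1) R] Proj(2) by (simp add: reduced_solution_def)
  then show thesis by (rule that)
qed

lemma reduced_solution_unique:
  assumes P: "positive_op sc ip A"
    and "reduced_solution A T X\<^sub>1" "reduced_solution A T X\<^sub>2"
  shows "X\<^sub>1 = X\<^sub>2"
proof
  fix x
  have B: "bounded_op sc ip A" using P by (rule positive_op_bounded)
  have "X\<^sub>1 x - X\<^sub>2 x = 0"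
  proof (rule range_closure_kernel_trivial[OF P])
    have "X\<^sub>1 x \<in> range_closure ip A" "X\<^sub>2 x \<in> range_closure ip A"
      using assms(2,3) by (simp_all add: reduced_solution_def)
    then show "X\<^sub>1 x - X\<^sub>2 x \<in> range_closure ip A"
      by (rule closed_subspace_diff[OF closed_subspace_range_closure[OF B]])
    show "ip (A (X\<^sub>1 x - X\<^sub>2 x)) y = 0" for y
      using assms(2,3) by (simp add: reduced_solution_def bounded_op_diff[OF B] ip_diff_left)
  qed
  then show "X\<^sub>1 x = X\<^sub>2 x" by simp
qed

lemma sharpA_adjoint:
  assumes P: "positive_op sc ip A" and T: "T \<in> BA sc ip A"
  shows "ip (A (sharpA sc ip A T x)) y = ip (A x) (T y)"
proof -
  obtain X where X: "reduced_solution A T X" using reduced_solution_exists[OF P T] .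
  then have "\<exists>!X. reduced_solution A T X" using reduced_solution_unique[OF P] by blast
  then have "reduced_solution A T (sharpA sc ip A T)"
    unfolding sharpA_eq_The_reduced_solution by (rule theI')
  then show ?thesis by (simp add: reduced_solution_def)
qed

lemma exists_normA_eq_1:
  assumes P: "positive_op sc ip A" and nonzero: "A \<noteq> (\<lambda>x. 0)"
  obtains x where "normA ip A x = 1"
proof -
  obtain z where z: "A z \<noteq> 0" using nonzero by auto
  have "normA ip A z \<noteq> 0"
  proof
    assume "normA ip A z = 0"
    then have "ip (A z) (A z) = 0" by (rule normA_eq_0_ip(1)[OF P])
    then show False using z ip_definite by blast
  qed
  then have "0 < normA ip A z" using normA_nonneg[OF P, of z] by linarith
  then have "normA ip A (sc (of_real (1 / normA ip A z)) z) = 1"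
    by (simp add: normA_sc[OF P] norm_divide)
  then show thesis by (rule that)
qed

lemma opnormA_bound:
  assumes P: "positive_op sc ip A" and T: "bounded_op sc ip T" and "A_bounded ip A T"
  shows "normA ip A (T u) \<le> opnormA ip A T * normA ip A u"
proof -
  obtain C where C: "\<And>x. normA ip A (T x) \<le> C * normA ip A x"
    using assms(3) unfolding A_bounded_def by blast
  show ?thesis
  proof (cases "normA ip A u = 0")
    case True
    then show ?thesis using C[of u] normA_nonneg[OF P, of "T u"] by simp
  next
    case False
    then have u: "0 < normA ip A u" using normA_nonneg[OF P, of u] by linarith
    define v where "v = sc (of_real (1 / normA ip A u)) u"
    have v: "normA ip A v = 1" using u by (simp add: v_def normA_sc[OF P] norm_divide)
    have "normA ip A (T x) \<le> C" if "normA ip A x = 1" for x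
      using C[of x] that by simp
    then have "bdd_above {normA ip A (T x) | x. normA ip A x = 1}"
      by (intro bdd_aboveI[of _ C]) blast
    then have "normA ip A (T v) \<le> opnormA ip A T"
      unfolding opnormA_def using v by (intro cSup_upper) blast+
    moreover have "normA ip A (T v) = normA ip A (T u) / normA ip A u"
      using u by (simp add: v_def bounded_op_sc[OF T] normA_sc[OF P] norm_divide)
    ultimately show ?thesis using u by (simp add: divide_le_eq)
  qed
qed

lemma numradA_upper:
  assumes P: "positive_op sc ip A" and "A_bounded ip A W" and x: "normA ip A x = 1"
  shows "cmod (ip (A (W x)) x) \<le> numradA ip A W"
proof -
  obtain C where C: "\<And>x. normA ip A (W x) \<le> C * normA ip A x"
    using assms(2) unfolding A_bounded_def by blast
  have "cmod (ip (A (W y)) y) \<le> C" if "normA ip A y = 1" for y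
    using normA_cauchy_schwarz[OF P, of "W y" y] C[of y] that by simp
  then have "bdd_above {cmod (ip (A (W y)) y) | y. normA ip A y = 1}"
    by (intro bdd_aboveI[of _ C]) blast
  then show ?thesis unfolding numradA_def using x by (intro cSup_upper) blast+
qed

lemma numradA_least:
  assumes "normA ip A x\<^sub>0 = 1" and "\<And>x. normA ip A x = 1 \<Longrightarrow> cmod (ip (A (W x)) x) \<le> K"
  shows "numradA ip A W \<le> K"
  unfolding numradA_def using assms by (intro cSup_least) blast+

lemma numradA_bound:
  assumes P: "positive_op sc ip A" and W: "bounded_op sc ip W" and "A_bounded ip A W"
  shows "cmod (ip (A (W z)) z) \<le> numradA ip A W * (normA ip A z)\<^sup>2"
proof (cases "normA ip A z = 0")
  case True
  then show ?thesis using normA_eq_0_ip(2)[OF P] by simp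
next
  case False
  then have z: "0 < normA ip A z" using normA_nonneg[OF P, of z] by linarith
  define r where "r = 1 / normA ip A z"
  define v where "v = sc (of_real r) z"
  have "normA ip A v = 1" using z by (simp add: v_def r_def normA_sc[OF P] norm_divide)
  then have "cmod (ip (A (W v)) v) \<le> numradA ip A W" by (rule numradA_upper[OF P assms(3)])
  moreover have "ip (A (W v)) v = of_real (r\<^sup>2) * ip (A (W z)) z"
    using positive_op_bounded[OF P]
    by (simp add: v_def bounded_op_sc[OF W] bounded_op_sc ip_sc_left ip_sc_right power2_eq_square)
  ultimately have "r\<^sup>2 * cmod (ip (A (W z)) z) \<le> numradA ip A W"
    by (simp add: norm_mult norm_power)
  then show ?thesis using z by (simp add: r_def power_divide divide_le_eq mult.commute)
qed

lemma A_adjoint_normA_le: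
  assumes P: "positive_op sc ip A" and adjoint: "\<And>x y. ip (A (X x)) y = ip (A x) (T y)"
    and T: "\<And>u. normA ip A (T u) \<le> c * normA ip A u" and "0 \<le> c"
  shows "normA ip A (X x) \<le> c * normA ip A x"
proof -
  have "normA ip A (X x) * normA ip A (X x) = Re (ip (A x) (T (X x)))"
    using normA_square[OF P, of "X x"] by (simp add: power2_eq_square adjoint)
  also have "\<dots> \<le> normA ip A x * normA ip A (T (X x))"
    using normA_cauchy_schwarz[OF P] complex_Re_le_cmod order_trans by blast
  also have "\<dots> \<le> normA ip A x * (c * normA ip A (X x))"
    using T P by (simp add: mult_left_mono)
  finally have "normA ip A (X x) * normA ip A (X x) \<le> (c * normA ip A x) * normA ip A (X x)"
    by (simp add: algebra_simps)
  then show ?thesis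
    using normA_nonneg[OF P, of "X x"] normA_nonneg[OF P, of x] \<open>0 \<le> c\<close>
    by (cases "normA ip A (X x) = 0") (auto simp: mult_le_cancel_right)
qed

text \<open>Comparing the \<open>S\<close>-form at \<open>x + z y\<close> and at \<open>x - z y\<close>: the difference isolates the mixed
  terms, and the parallelogram law bounds the sum of the two \<open>A\<close>-norms.\<close>
lemma cmod_ip_swap_rotated_le:
  assumes P: "positive_op sc ip A" and S: "bounded_op sc ip S"
    and numrad: "\<And>u. cmod (ip (A (S u)) u) \<le> w * (normA ip A u)\<^sup>2"
  shows "cmod (cnj z * ip (A (S x)) y + z * ip (A (S y)) x)
    \<le> w * ((normA ip A x)\<^sup>2 + (cmod z)\<^sup>2 * (normA ip A y)\<^sup>2)"
proof -
  define E where "E z = ip (A (S (x + sc z y))) (x + sc z y)" for z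
  have diff: "E z - E (- z) = 2 * (cnj z * ip (A (S x)) y + z * ip (A (S y)) x)"
    unfolding E_def ip_expand[OF bounded_op_comp[OF positive_op_bounded[OF P] S]]
    by (simp add: algebra_simps)
  have "2 * cmod (cnj z * ip (A (S x)) y + z * ip (A (S y)) x) = cmod (E z - E (- z))"
    by (simp only: diff norm_mult) simp
  also have "\<dots> \<le> cmod (E z) + cmod (E (- z))" by (rule norm_triangle_ineq4)
  also have "\<dots> \<le> w * (normA ip A (x + sc z y))\<^sup>2 + w * (normA ip A (x - sc z y))\<^sup>2"
    unfolding E_def using numrad by (intro add_mono) (simp_all add: sc_minus_left)
  also have "\<dots> = w * ((normA ip A (x + sc z y))\<^sup>2 + (normA ip A (x - sc z y))\<^sup>2)"
    by (simp add: distrib_left)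
  also have "\<dots> = 2 * (w * ((normA ip A x)\<^sup>2 + (cmod z)\<^sup>2 * (normA ip A y)\<^sup>2))"
    unfolding normA_parallelogram[OF P] by (simp add: normA_sc[OF P] power_mult_distrib)
  finally show ?thesis by simp
qed

lemma cmod_ip_swap_le:
  assumes P: "positive_op sc ip A" and S: "bounded_op sc ip S"
    and numrad: "\<And>u. cmod (ip (A (S u)) u) \<le> w * (normA ip A u)\<^sup>2" and w: "0 \<le> w"
  shows "cmod (ip (A (S x)) y + ip (A (S y)) x) \<le> 2 * w * normA ip A x * normA ip A y"
    and "cmod (ip (A (S x)) y - ip (A (S y)) x) \<le> 2 * w * normA ip A x * normA ip A y"
proof -
  define a where "a = ip (A (S x)) y"
  define b where "b = ip (A (S y)) x"
  have rotated: "cmod (cnj z * a + z * b) \<le> w * (normA ip A x)\<^sup>2 + (cmod z)\<^sup>2 * (w * (normA ip A y)\<^sup>2)"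
    for z
    using cmod_ip_swap_rotated_le[OF P S numrad, of z x y] by (simp add: a_def b_def algebra_simps)
  show "cmod (ip (A (S x)) y + ip (A (S y)) x) \<le> 2 * w * normA ip A x * normA ip A y"
    unfolding a_def[symmetric] b_def[symmetric]
  proof (rule le_two_mult_if_linear_le_quadratic)
    fix t :: real
    assume "0 < t"
    then have "t * cmod (a + b) = cmod (cnj (of_real t) * a + of_real t * b)"
      by (simp add: distrib_left[symmetric] norm_mult)
    also have "\<dots> \<le> w * (normA ip A x)\<^sup>2 + t\<^sup>2 * (w * (normA ip A y)\<^sup>2)"
      using rotated[of "of_real t"] by simp
    finally show "t * cmod (a + b) \<le> w * (normA ip A x)\<^sup>2 + t\<^sup>2 * (w * (normA ip A y)\<^sup>2)" .
  qed (use w P in simp_all)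
  show "cmod (ip (A (S x)) y - ip (A (S y)) x) \<le> 2 * w * normA ip A x * normA ip A y"
    unfolding a_def[symmetric] b_def[symmetric]
  proof (rule le_two_mult_if_linear_le_quadratic)
    fix t :: real
    assume "0 < t"
    have "cnj (\<i> * of_real t) * a + \<i> * of_real t * b = - (\<i> * of_real t) * (a - b)"
      by (simp add: algebra_simps)
    then have "t * cmod (a - b) = cmod (cnj (\<i> * of_real t) * a + \<i> * of_real t * b)"
      using \<open>0 < t\<close> by (simp add: norm_mult)
    also have "\<dots> \<le> w * (normA ip A x)\<^sup>2 + t\<^sup>2 * (w * (normA ip A y)\<^sup>2)"
      using rotated[of "\<i> * of_real t"] by (simp add: norm_mult)
    finally show "t * cmod (a - b) \<le> w * (normA ip A x)\<^sup>2 + t\<^sup>2 * (w * (normA ip A y)\<^sup>2)" .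
  qed (use w P in simp_all)
qed

lemma cmod_ip_product_le:
  assumes P: "positive_op sc ip A" and S: "bounded_op sc ip S"
    and numrad: "\<And>u. cmod (ip (A (S u)) u) \<le> w * (normA ip A u)\<^sup>2" and w: "0 \<le> w"
    and adjoint: "\<And>u v. ip (A (X u)) v = ip (A u) (T v)"
  shows "cmod (ip (A (T (S x))) x)
      \<le> w * normA ip A x * normA ip A (X x) + 1/2 * cmod (ip (A (T (S x) + S (X x))) x)"
    and "cmod (ip (A (T (S x))) x)
      \<le> w * normA ip A x * normA ip A (X x) + 1/2 * cmod (ip (A (T (S x) - S (X x))) x)"
proof -
  have B: "bounded_op sc ip A" using P by (rule positive_op_bounded)
  define a where "a = ip (A (T (S x))) x"
  define b where "b = ip (A (S (X x))) x"
  have "a = ip (A (S x)) (X x)"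
    unfolding a_def using positive_op_conj_sym[OF P, of "X x" "S x"]
      positive_op_conj_sym[OF P, of x "T (S x)"] adjoint[of x "S x"]
    by simp
  then have "cmod (a + b) \<le> 2 * w * normA ip A x * normA ip A (X x)"
    and "cmod (a - b) \<le> 2 * w * normA ip A x * normA ip A (X x)"
    unfolding b_def using cmod_ip_swap_le[OF P S numrad w, of x "X x"] by simp_all
  moreover have "2 * cmod a \<le> cmod (a + b) + cmod (a - b)"
    using norm_triangle_ineq[of "a + b" "a - b"] by (simp add: norm_mult[symmetric])
  moreover have "ip (A (T (S x) + S (X x))) x = a + b" "ip (A (T (S x) - S (X x))) x = a - b"
    unfolding a_def b_def by (simp_all add: bounded_op_add[OF B] bounded_op_diff[OF B]
        ip_add_left ip_diff_left)
  ultimately show "cmod (ip (A (T (S x))) x)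
      \<le> w * normA ip A x * normA ip A (X x) + 1/2 * cmod (ip (A (T (S x) + S (X x))) x)"
    and "cmod (ip (A (T (S x))) x)
      \<le> w * normA ip A x * normA ip A (X x) + 1/2 * cmod (ip (A (T (S x) - S (X x))) x)"
    by (simp_all add: a_def[symmetric])
qed

lemma opnormA_nonneg:
  assumes P: "positive_op sc ip A" and "bounded_op sc ip T" "A_bounded ip A T"
    and x\<^sub>0: "normA ip A x\<^sub>0 = 1"
  shows "0 \<le> opnormA ip A T"
  using opnormA_bound[OF assms(1-3), of x\<^sub>0] x\<^sub>0 normA_nonneg[OF P, of "T x\<^sub>0"] by simp

lemma numradA_nonneg:
  assumes "positive_op sc ip A" "A_bounded ip A W" "normA ip A x\<^sub>0 = 1"
  shows "0 \<le> numradA ip A W"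
  using numradA_upper[OF assms] norm_ge_zero order_trans by blast

lemma normA_sharpA_le:
  assumes P: "positive_op sc ip A" and T: "T \<in> BA sc ip A" and x\<^sub>0: "normA ip A x\<^sub>0 = 1"
  shows "normA ip A (sharpA sc ip A T x) \<le> opnormA ip A T * normA ip A x"
proof -
  have "bounded_op sc ip T" "A_bounded ip A T" using T BA_A_bounded[OF P] by (simp_all add: BA_def)
  then show ?thesis
    using A_adjoint_normA_le[OF P sharpA_adjoint[OF P T] opnormA_bound[OF P]
        opnormA_nonneg[OF P _ _ x\<^sub>0]]
    by blast
qed

lemma A_bounded_sharpA:
  assumes P: "positive_op sc ip A" and T: "T \<in> BA sc ip A" and x\<^sub>0: "normA ip A x\<^sub>0 = 1"
  shows "A_bounded ip A (sharpA sc ip A T)"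
proof -
  have "bounded_op sc ip T" "A_bounded ip A T" using T BA_A_bounded[OF P] by (simp_all add: BA_def)
  then have "0 \<le> opnormA ip A T" by (rule opnormA_nonneg[OF P _ _ x\<^sub>0])
  then show ?thesis using normA_sharpA_le[OF P T x\<^sub>0] unfolding A_bounded_def by blast
qed

lemma cmod_ip_product_le_opnormA_numradA:
  assumes P: "positive_op sc ip A" and T: "T \<in> BA sc ip A" and S: "S \<in> BA sc ip A"
    and x: "normA ip A x = 1"
  shows "cmod (ip (A (T (S x))) x) \<le> opnormA ip A T * numradA ip A S
      + 1/2 * cmod (ip (A (T (S x) + S (sharpA sc ip A T x))) x)"
    and "cmod (ip (A (T (S x))) x) \<le> opnormA ip A T * numradA ip A S
      + 1/2 * cmod (ip (A (T (S x) - S (sharpA sc ip A T x))) x)"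
proof -
  have S': "bounded_op sc ip S" "A_bounded ip A S" using S BA_A_bounded[OF P] by (simp_all add: BA_def)
  have w: "0 \<le> numradA ip A S" by (rule numradA_nonneg[OF P S'(2) x])
  have "numradA ip A S * normA ip A x * normA ip A (sharpA sc ip A T x)
      \<le> opnormA ip A T * numradA ip A S"
    using mult_left_mono[OF normA_sharpA_le[OF P T x, of x] w] x by (simp add: mult.commute)
  then show "cmod (ip (A (T (S x))) x) \<le> opnormA ip A T * numradA ip A S
      + 1/2 * cmod (ip (A (T (S x) + S (sharpA sc ip A T x))) x)"
    and "cmod (ip (A (T (S x))) x) \<le> opnormA ip A T * numradA ip A S
      + 1/2 * cmod (ip (A (T (S x) - S (sharpA sc ip A T x))) x)"
    using cmod_ip_product_le[of A S "numradA ip A S" "sharpA sc ip A T" T x,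
        OF P S'(1) numradA_bound[OF P S'] w sharpA_adjoint[OF P T]]
    by linarith+
qed

end

theorem theorem2p2:
  fixes sc :: "complex \<Rightarrow> 'a::ab_group_add \<Rightarrow> 'a"
    and ip :: "'a \<Rightarrow> 'a \<Rightarrow> complex"
    and A T S :: "'a \<Rightarrow> 'a"
  assumes "complex_hilbert sc ip"
    and "positive_op sc ip A"
    and "A \<noteq> (\<lambda>x. 0)"
    and "T \<in> BA sc ip A"
    and "S \<in> BA sc ip A"
  shows "numradA ip A (T \<circ> S) \<le> opnormA ip A T * numradA ip A S
           + 1/2 * numradA ip A (\<lambda>x. T (S x) + S (sharpA sc ip A T x))
       \<and> numradA ip A (T \<circ> S) \<le> opnormA ip A T * numradA ip A S
           + 1/2 * numradA ip A (\<lambda>x. T (S x) - S (sharpA sc ip A T x))"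
proof -
  interpret complex_hilbert sc ip by fact
  note P = \<open>positive_op sc ip A\<close> and T = \<open>T \<in> BA sc ip A\<close> and S = \<open>S \<in> BA sc ip A\<close>
  obtain x\<^sub>0 where x\<^sub>0: "normA ip A x\<^sub>0 = 1" using exists_normA_eq_1[OF P assms(3)] .
  have "A_bounded ip A (\<lambda>x. T (S x))" "A_bounded ip A (\<lambda>x. S (sharpA sc ip A T x))"
    using A_bounded_comp BA_A_bounded[OF P] A_bounded_sharpA[OF P T x\<^sub>0] T S by blast+
  then have sum: "A_bounded ip A (\<lambda>x. T (S x) + S (sharpA sc ip A T x))"
    and diff: "A_bounded ip A (\<lambda>x. T (S x) - S (sharpA sc ip A T x))"
    using A_bounded_add[OF P] A_bounded_diff[OF P] by blast+
  have "numradA ip A (\<lambda>x. T (S x)) \<le> opnormA ip A T * numradA ip A S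
      + 1/2 * numradA ip A (\<lambda>x. T (S x) + S (sharpA sc ip A T x))"
  proof (rule numradA_least[OF x\<^sub>0])
    fix x
    assume x: "normA ip A x = 1"
    show "cmod (ip (A (T (S x))) x) \<le> opnormA ip A T * numradA ip A S
        + 1/2 * numradA ip A (\<lambda>x. T (S x) + S (sharpA sc ip A T x))"
      using cmod_ip_product_le_opnormA_numradA(1)[OF P T S x] numradA_upper[OF P sum x] by linarith
  qed
  moreover have "numradA ip A (\<lambda>x. T (S x)) \<le> opnormA ip A T * numradA ip A S
      + 1/2 * numradA ip A (\<lambda>x. T (S x) - S (sharpA sc ip A T x))"
  proof (rule numradA_least[OF x\<^sub>0])
    fix x
    assume x: "normA ip A x = 1"
    show "cmod (ip (A (T (S x))) x) \<le> opnormA ip A T * numradA ip A S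
        + 1/2 * numradA ip A (\<lambda>x. T (S x) - S (sharpA sc ip A T x))"
      using cmod_ip_product_le_opnormA_numradA(2)[OF P T S x] numradA_upper[OF P diff x] by linarith
  qed
  ultimately show ?thesis by (simp add: comp_def)
qed

end
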